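(* Let $h$ be a meromorphic function on $\mathfrak{H}$ and let $\Gamma$ be a finite index subgroup of $\mathrm{SL}_2(\mathbb{Z})$. Then $h$ is $\rho$-equivariant for some triangular representation $\rho$ of $\Gamma$ if and only if the derivative $h'$ is a meromorphic weight $2$ modular form with a character of $\Gamma$.
   Context: $\mathfrak{H}$ is the complex upper half-plane. For a matrix $\begin{pmatrix}a&b\\c&d\end{pmatrix}$ and $z\in\mathbb{C}$, write $\begin{pmatrix}a&b\\c&d\end{pmatrix}\cdot z=\frac{az+b}{cz+d}$. Given a representation $\rho:\Gamma\to\mathrm{GL}_2(\mathbb{C})$, a meromorphic function $h$ on $\mathfrak{H}$ is $\rho$-equivariant for $\Gamma$ if $h(\gamma\tau)=\rho(\gamma)\cdot h(\tau)$ for all $\gamma\in\Gamma,\tau\in\mathfrak{H}$ (linear fractional action on both sides); $\rho$ is triangular if all $\rho(\gamma)$ are upper triangular. A meromorphic weight $2$ modular form with a character $\chi$ of $\Gamma$ (a homomorphism $\chi:\Gamma\to\mathbb{C}^\times$) is a meromorphic function $g$ on $\mathfrak{H}$ with $g(\gamma\tau)=\chi(\gamma)(c\tau+d)^2g(\tau)$ for all $\gamma=\begin{pmatrix}a&b\\c&d\end{pmatrix}\in\Gamma$. *)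

theory Defs
  imports "HOL-Complex_Analysis.Complex_Analysis"
begin

definition upper_half_plane :: "complex set" where
  "upper_half_plane = {z. Im z > 0}"

definition SL2Z :: "(int^2^2) set" where
  "SL2Z = {A. det A = 1}"

definition finite_index_subgroup_SL2Z :: "(int^2^2) set \<Rightarrow> bool" where
  "finite_index_subgroup_SL2Z G \<longleftrightarrow>
     G \<subseteq> SL2Z \<and> mat 1 \<in> G \<and>
     (\<forall>A\<in>G. \<forall>B\<in>G. A ** B \<in> G) \<and>
     (\<forall>A\<in>G. \<exists>B\<in>G. A ** B = mat 1 \<and> B ** A = mat 1) \<and>
     finite {(\<lambda>B. A ** B) ` G | A. A \<in> SL2Z}"

definition moeb :: "complex^2^2 \<Rightarrow> complex \<Rightarrow> complex" where
  "moeb M z = (M$1$1 * z + M$1$2) / (M$2$1 * z + M$2$2)"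

definition cmat :: "int^2^2 \<Rightarrow> complex^2^2" where
  "cmat A = (\<chi> i j. of_int (A$i$j))"

definition is_rep :: "(int^2^2) set \<Rightarrow> (int^2^2 \<Rightarrow> complex^2^2) \<Rightarrow> bool" where
  "is_rep G \<rho> \<longleftrightarrow> (\<forall>A\<in>G. invertible (\<rho> A)) \<and> (\<forall>A\<in>G. \<forall>B\<in>G. \<rho> (A ** B) = \<rho> A ** \<rho> B)"

definition triangular_rep :: "(int^2^2) set \<Rightarrow> (int^2^2 \<Rightarrow> complex^2^2) \<Rightarrow> bool" where
  "triangular_rep G \<rho> \<longleftrightarrow> is_rep G \<rho> \<and> (\<forall>A\<in>G. \<rho> A $2$1 = 0)"

definition is_character :: "(int^2^2) set \<Rightarrow> (int^2^2 \<Rightarrow> complex) \<Rightarrow> bool" where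
  "is_character G chi \<longleftrightarrow> (\<forall>A\<in>G. chi A \<noteq> 0) \<and> (\<forall>A\<in>G. \<forall>B\<in>G. chi (A ** B) = chi A * chi B)"

text \<open>rho-equivariance of a meromorphic function; identities between meromorphic functions
  are required away from a discrete subset of H (values at poles are immaterial).\<close>
definition rho_equivariant :: "(int^2^2) set \<Rightarrow> (int^2^2 \<Rightarrow> complex^2^2) \<Rightarrow> (complex \<Rightarrow> complex) \<Rightarrow> bool" where
  "rho_equivariant G \<rho> h \<longleftrightarrow>
     (\<forall>\<gamma>\<in>G. \<forall>\<^sub>\<approx>\<tau>\<in>upper_half_plane. h (moeb (cmat \<gamma>) \<tau>) = moeb (\<rho> \<gamma>) (h \<tau>))"

definition mero_modform2_char :: "(int^2^2) set \<Rightarrow> (int^2^2 \<Rightarrow> complex) \<Rightarrow> (complex \<Rightarrow> complex) \<Rightarrow> bool" where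
  "mero_modform2_char G chi g \<longleftrightarrow> g meromorphic_on upper_half_plane \<and>
     (\<forall>\<gamma>\<in>G. \<forall>\<^sub>\<approx>\<tau>\<in>upper_half_plane.
        g (moeb (cmat \<gamma>) \<tau>) = chi \<gamma> * (of_int (\<gamma>$2$1) * \<tau> + of_int (\<gamma>$2$2))^2 * g \<tau>)"

end

theory Submission
  imports Defs
begin

text \<open>
  For a triangular \<rho>, \<rho>-equivariance of h is the affine relation
  h(\<gamma>\<tau>) = \<chi>(\<gamma>) h(\<tau>) + \<beta>(\<gamma>), where \<chi> is the ratio of the diagonal entries of \<rho>(\<gamma>);
  differentiating with (\<gamma>\<tau>)' = (c\<tau> + d)^(-2) gives h'(\<gamma>\<tau>) = \<chi>(\<gamma>) (c\<tau> + d)^2 h'(\<tau>).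
  Conversely, this relation says that h(\<gamma>\<tau>) - \<chi>(\<gamma>) h(\<tau>) has derivative zero on the upper
  half-plane minus the (sparse) singularities of h, a connected set, so it is a constant \<beta>(\<gamma>);
  comparing h\<circ>(AB) with h\<circ>A\<circ>B shows that \<beta> is a cocycle for \<chi>, i.e. that
  \<gamma> \<mapsto> [[\<chi>(\<gamma>), \<beta>(\<gamma>)], [0, 1]] is a representation. The finite index of \<Gamma> plays no role.
\<close>

lemma eventually_cosparse_compose:
  assumes "open U" "open V" "\<And>z. z \<in> U \<Longrightarrow> \<phi> z \<in> V"
    and "\<And>z. z \<in> U \<Longrightarrow> filterlim \<phi> (at (\<phi> z)) (at z)"
    and "eventually P (cosparse V)"
  shows "eventually (\<lambda>z. P (\<phi> z)) (cosparse U)"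
  unfolding eventually_cosparse_open_eq[OF assms(1)]
proof
  fix z assume "z \<in> U"
  then have "eventually P (at (\<phi> z))"
    using assms(3,5) unfolding eventually_cosparse_open_eq[OF assms(2)] by blast
  then show "eventually (\<lambda>z. P (\<phi> z)) (at z)"
    using eventually_compose_filterlim assms(4)[OF \<open>z \<in> U\<close>] by blast
qed

lemma filterlim_at_inj_on:
  assumes "open U" "inj_on \<phi> U" "isCont \<phi> z" "z \<in> U"
  shows "filterlim \<phi> (at (\<phi> z)) (at z)"
proof (rule filterlim_atI)
  show "(\<phi> \<longlongrightarrow> \<phi> z) (at z)"
    using assms(3) by (simp add: isCont_def)
  have "eventually (\<lambda>w. w \<in> U - {z}) (at z)"
    using assms(1,4) by (intro eventually_at_in_open) auto
  then show "eventually (\<lambda>w. \<phi> w \<noteq> \<phi> z) (at z)"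
    by eventually_elim (use assms(2,4) in \<open>auto dest: inj_onD\<close>)
qed

lemma cosparse_set_open_connected:
  fixes U :: "complex set"
  assumes "open U" "connected U" "eventually P (cosparse U)"
  shows "open {z \<in> U. P z}" "connected {z \<in> U. P z}"
proof -
  have sparse: "{z. \<not> P z} sparse_in U"
    using assms(3) by (simp add: eventually_cosparse)
  have eq: "{z \<in> U. P z} = U - {z. \<not> P z}"
    by auto
  show "open {z \<in> U. P z}"
    unfolding eq by (rule open_diff_sparse_pts[OF assms(1) sparse])
  show "connected {z \<in> U. P z}"
    unfolding eq by (rule sparse_imp_connected[OF _ assms(2,1) sparse]) simp
qed

text \<open>Injectivity of \<phi> is what allows pulling cosparse properties of h back along \<phi>.\<close>

lemma affine_relation_iff_deriv_relation:
  fixes h \<phi> \<phi>' :: "complex \<Rightarrow> complex"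
  assumes U: "open U" "connected U" and h: "h meromorphic_on U"
    and \<phi>: "\<And>z. z \<in> U \<Longrightarrow> \<phi> z \<in> U" "inj_on \<phi> U"
      "\<And>z. z \<in> U \<Longrightarrow> (\<phi> has_field_derivative \<phi>' z) (at z)"
  shows "(\<exists>b. \<forall>\<^sub>\<approx>z\<in>U. h (\<phi> z) = a * h z + b) \<longleftrightarrow>
         (\<forall>\<^sub>\<approx>z\<in>U. deriv h (\<phi> z) * \<phi>' z = a * deriv h z)"
proof -
  define P where "P z \<longleftrightarrow> z \<in> U \<and> h analytic_on {z} \<and> h analytic_on {\<phi> z}" for z
  have pullback: "eventually Q (cosparse U) \<Longrightarrow> eventually (\<lambda>z. Q (\<phi> z)) (cosparse U)" for Q
    by (rule eventually_cosparse_compose[OF U(1) U(1)])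
      (use \<phi> U(1) in \<open>auto intro: filterlim_at_inj_on DERIV_isCont\<close>)
  have evP: "eventually P (cosparse U)"
    using eventually_in_cosparse[OF order.refl U(1)] meromorphic_on_imp_analytic_cosparse[OF h]
      pullback[OF meromorphic_on_imp_analytic_cosparse[OF h]]
    by eventually_elim (simp add: P_def)
  have deriv_defect: "((\<lambda>z. h (\<phi> z) - a * h z) has_field_derivative
      deriv h (\<phi> z) * \<phi>' z - a * deriv h z) (at z)" if "P z" for z
  proof -
    have "(h has_field_derivative deriv h w) (at w)" if "h analytic_on {w}" for w
      using that analytic_on_imp_differentiable_at DERIV_deriv_iff_field_differentiable by blast
    then show ?thesis
      using \<open>P z\<close> \<phi>(3) unfolding P_def by (auto intro!: derivative_eq_intros DERIV_chain')
  qed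
  show ?thesis
  proof
    assume "\<exists>b. \<forall>\<^sub>\<approx>z\<in>U. h (\<phi> z) = a * h z + b"
    then obtain b where b: "\<forall>\<^sub>\<approx>z\<in>U. h (\<phi> z) = a * h z + b"
      by blast
    have evW: "\<forall>\<^sub>\<approx>z\<in>U. P z \<and> h (\<phi> z) = a * h z + b"
      using evP b by eventually_elim simp
    define W where "W = {z \<in> U. P z \<and> h (\<phi> z) = a * h z + b}"
    have "open W"
      unfolding W_def using cosparse_set_open_connected(1)[OF U evW] .
    show "\<forall>\<^sub>\<approx>z\<in>U. deriv h (\<phi> z) * \<phi>' z = a * deriv h z"
      using evW
    proof eventually_elim
      case (elim z)
      then have "z \<in> W"
        using P_def W_def by auto
      have "((\<lambda>z. h (\<phi> z) - a * h z) has_field_derivative 0) (at z)"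
        by (rule has_field_derivative_transform_within_open[OF DERIV_const \<open>open W\<close> \<open>z \<in> W\<close>])
          (simp add: W_def)
      then show ?case
        using DERIV_unique[OF deriv_defect] elim by fastforce
    qed
  next
    assume ev: "\<forall>\<^sub>\<approx>z\<in>U. deriv h (\<phi> z) * \<phi>' z = a * deriv h z"
    have evW: "\<forall>\<^sub>\<approx>z\<in>U. P z \<and> deriv h (\<phi> z) * \<phi>' z = a * deriv h z"
      using evP ev by eventually_elim simp
    define W where "W = {z \<in> U. P z \<and> deriv h (\<phi> z) * \<phi>' z = a * deriv h z}"
    have "(\<lambda>z. h (\<phi> z) - a * h z) constant_on W"
    proof (rule has_field_derivative_0_imp_constant_on)
      show "connected W" "open W"
        unfolding W_def using cosparse_set_open_connected[OF U evW] by blast+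
      show "((\<lambda>z. h (\<phi> z) - a * h z) has_field_derivative 0) (at z)" if "z \<in> W" for z
        using deriv_defect[of z] that by (simp add: W_def)
    qed
    then obtain b where b: "\<And>z. z \<in> W \<Longrightarrow> h (\<phi> z) - a * h z = b"
      unfolding constant_on_def by blast
    have "\<forall>\<^sub>\<approx>z\<in>U. h (\<phi> z) = a * h z + b"
      using evW by eventually_elim (use b in \<open>force simp: W_def P_def\<close>)
    then show "\<exists>b. \<forall>\<^sub>\<approx>z\<in>U. h (\<phi> z) = a * h z + b"
      by blast
  qed
qed

abbreviation automorphy_factor :: "int^2^2 \<Rightarrow> complex \<Rightarrow> complex" where
  "automorphy_factor \<gamma> z \<equiv> of_int (\<gamma>$2$1) * z + of_int (\<gamma>$2$2)"

lemma SL2Z_det_2: "A \<in> SL2Z \<Longrightarrow> A$1$1 * A$2$2 - A$1$2 * A$2$1 = 1"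
  by (simp add: SL2Z_def det_2)

lemma matrix_matrix_mult_2_nth:
  "(A ** (B :: 'a :: semiring_1^2^2)) $ i $ j = A$i$1 * B$1$j + A$i$2 * B$2$j"
  by (simp add: matrix_matrix_mult_def sum_2)

lemma moeb_cmat:
  "moeb (cmat A) z = (of_int (A$1$1) * z + of_int (A$1$2)) / (of_int (A$2$1) * z + of_int (A$2$2))"
  by (simp add: moeb_def cmat_def)

lemma Im_moebius_int:
  fixes a b c d :: int and z :: complex
  shows "Im ((of_int a * z + of_int b) / (of_int c * z + of_int d)) =
         of_int (a * d - b * c) * Im z / (cmod (of_int c * z + of_int d))\<^sup>2"
  by (simp add: Im_divide' algebra_simps)

lemma Im_moeb_SL2Z:
  "\<gamma> \<in> SL2Z \<Longrightarrow> Im (moeb (cmat \<gamma>) z) = Im z / (cmod (automorphy_factor \<gamma> z))\<^sup>2"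
  unfolding moeb_cmat Im_moebius_int by (simp add: SL2Z_det_2)

lemma SL2Z_denominator_nonzero:
  assumes "\<gamma> \<in> SL2Z" "Im z > 0"
  shows "automorphy_factor \<gamma> z \<noteq> 0"
proof (cases "\<gamma>$2$1 = 0")
  case True
  then show ?thesis
    using SL2Z_det_2[OF assms(1)] by auto
next
  case False
  then have "Im (automorphy_factor \<gamma> z) \<noteq> 0"
    using assms(2) by simp
  then show ?thesis
    by force
qed

lemma moeb_SL2Z_in_upper_half_plane:
  "\<gamma> \<in> SL2Z \<Longrightarrow> z \<in> upper_half_plane \<Longrightarrow> moeb (cmat \<gamma>) z \<in> upper_half_plane"
  unfolding upper_half_plane_def using Im_moeb_SL2Z SL2Z_denominator_nonzero by simp

lemma inj_on_moeb_SL2Z: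
  assumes "\<gamma> \<in> SL2Z"
  shows "inj_on (moeb (cmat \<gamma>)) upper_half_plane"
proof
  fix z w assume "z \<in> upper_half_plane" "w \<in> upper_half_plane"
    and eq: "moeb (cmat \<gamma>) z = moeb (cmat \<gamma>) w"
  then have "automorphy_factor \<gamma> z \<noteq> 0" "automorphy_factor \<gamma> w \<noteq> 0"
    using SL2Z_denominator_nonzero[OF assms] by (auto simp: upper_half_plane_def)
  with eq have "(of_int (\<gamma>$1$1) * z + of_int (\<gamma>$1$2)) * automorphy_factor \<gamma> w =
      (of_int (\<gamma>$1$1) * w + of_int (\<gamma>$1$2)) * automorphy_factor \<gamma> z"
    unfolding moeb_cmat by (simp add: divide_simps)
  then have "of_int (\<gamma>$1$1 * \<gamma>$2$2 - \<gamma>$1$2 * \<gamma>$2$1) * (z - w) = (0 :: complex)"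
    by (simp add: algebra_simps)
  then show "z = w"
    using SL2Z_det_2[OF assms] by simp
qed

lemma moeb_SL2Z_has_field_derivative:
  assumes "\<gamma> \<in> SL2Z" "Im z > 0"
  shows "(moeb (cmat \<gamma>) has_field_derivative 1 / (automorphy_factor \<gamma> z)\<^sup>2) (at z)"
proof -
  let ?c = "of_int (\<gamma>$2$1) :: complex" and ?d = "of_int (\<gamma>$2$2) :: complex"
  have "(moeb (cmat \<gamma>) has_field_derivative
      (of_int (\<gamma>$1$1) * (?c * z + ?d) - (of_int (\<gamma>$1$1) * z + of_int (\<gamma>$1$2)) * ?c) / (?c * z + ?d)\<^sup>2) (at z)"
    unfolding moeb_cmat[abs_def] using SL2Z_denominator_nonzero[OF assms]
    by (auto intro!: derivative_eq_intros simp: power2_eq_square)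
  also have "of_int (\<gamma>$1$1) * (?c * z + ?d) - (of_int (\<gamma>$1$1) * z + of_int (\<gamma>$1$2)) * ?c
      = of_int (\<gamma>$1$1 * \<gamma>$2$2 - \<gamma>$1$2 * \<gamma>$2$1)"
    by (simp add: algebra_simps)
  finally show ?thesis
    using SL2Z_det_2[OF assms(1)] by simp
qed

lemma moeb_cmat_mult:
  assumes "A \<in> SL2Z" "B \<in> SL2Z" "Im z > 0"
  shows "moeb (cmat (A ** B)) z = moeb (cmat A) (moeb (cmat B) z)"
proof -
  have frac: "(a * (p / q) + b) / (c * (p / q) + d) = (a * p + b * q) / (c * p + d * q)"
    if "q \<noteq> 0" for a b c d p q :: complex
  proof -
    have "a * (p / q) + b = (a * p + b * q) / q" "c * (p / q) + d = (c * p + d * q) / q"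
      using that by (auto simp: field_simps)
    then show ?thesis
      using that by simp
  qed
  show ?thesis
    unfolding moeb_cmat matrix_matrix_mult_2_nth frac[OF SL2Z_denominator_nonzero[OF assms(2,3)]]
    by (simp add: algebra_simps)
qed

lemma open_upper_half_plane: "open upper_half_plane"
  unfolding upper_half_plane_def by (rule open_halfspace_Im_gt)

lemma connected_upper_half_plane: "connected upper_half_plane"
  unfolding upper_half_plane_def by (rule connected_halfspace_Im_gt)

lemma eventually_cosparse_moeb_SL2Z:
  assumes "\<gamma> \<in> SL2Z" "\<forall>\<^sub>\<approx>z\<in>upper_half_plane. P z"
  shows "\<forall>\<^sub>\<approx>z\<in>upper_half_plane. P (moeb (cmat \<gamma>) z)"
proof (rule eventually_cosparse_compose[OF open_upper_half_plane open_upper_half_plane _ _ assms(2)])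
  fix z assume z: "z \<in> upper_half_plane"
  show "moeb (cmat \<gamma>) z \<in> upper_half_plane"
    by (rule moeb_SL2Z_in_upper_half_plane[OF assms(1) z])
  have "isCont (moeb (cmat \<gamma>)) z"
    using moeb_SL2Z_has_field_derivative[OF assms(1)] z DERIV_isCont
    unfolding upper_half_plane_def by blast
  then show "filterlim (moeb (cmat \<gamma>)) (at (moeb (cmat \<gamma>) z)) (at z)"
    by (rule filterlim_at_inj_on[OF open_upper_half_plane inj_on_moeb_SL2Z[OF assms(1)] _ z])
qed

lemma SL2Z_affine_relation_iff_weight_2:
  assumes "\<gamma> \<in> SL2Z" "h meromorphic_on upper_half_plane"
  shows "(\<exists>b. \<forall>\<^sub>\<approx>z\<in>upper_half_plane. h (moeb (cmat \<gamma>) z) = a * h z + b) \<longleftrightarrow>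
         (\<forall>\<^sub>\<approx>z\<in>upper_half_plane.
            deriv h (moeb (cmat \<gamma>) z) = a * (automorphy_factor \<gamma> z)\<^sup>2 * deriv h z)"
proof -
  have "(\<exists>b. \<forall>\<^sub>\<approx>z\<in>upper_half_plane. h (moeb (cmat \<gamma>) z) = a * h z + b) \<longleftrightarrow>
        (\<forall>\<^sub>\<approx>z\<in>upper_half_plane.
            deriv h (moeb (cmat \<gamma>) z) * (1 / (automorphy_factor \<gamma> z)\<^sup>2) = a * deriv h z)"
    using assms moeb_SL2Z_has_field_derivative
    by (intro affine_relation_iff_deriv_relation open_upper_half_plane connected_upper_half_plane
        moeb_SL2Z_in_upper_half_plane inj_on_moeb_SL2Z) (auto simp: upper_half_plane_def)
  also have "\<dots> \<longleftrightarrow> (\<forall>\<^sub>\<approx>z\<in>upper_half_plane.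
            deriv h (moeb (cmat \<gamma>) z) = a * (automorphy_factor \<gamma> z)\<^sup>2 * deriv h z)"
    using eventually_in_cosparse[OF order.refl open_upper_half_plane]
  proof (rule eventually_subst[OF eventually_mono])
    fix z assume "z \<in> upper_half_plane"
    then have "automorphy_factor \<gamma> z \<noteq> 0"
      using SL2Z_denominator_nonzero[OF assms(1)] by (simp add: upper_half_plane_def)
    then show "(deriv h (moeb (cmat \<gamma>) z) * (1 / (automorphy_factor \<gamma> z)\<^sup>2) = a * deriv h z) =
               (deriv h (moeb (cmat \<gamma>) z) = a * (automorphy_factor \<gamma> z)\<^sup>2 * deriv h z)"
      by (auto simp: field_simps)
  qed
  finally show ?thesis .
qed

lemma affine_relation_cocycle:
  fixes h :: "complex \<Rightarrow> complex"
  assumes "A \<in> SL2Z" "B \<in> SL2Z"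
    and A: "\<forall>\<^sub>\<approx>z\<in>upper_half_plane. h (moeb (cmat A) z) = a * h z + b"
    and B: "\<forall>\<^sub>\<approx>z\<in>upper_half_plane. h (moeb (cmat B) z) = a' * h z + b'"
    and AB: "\<forall>\<^sub>\<approx>z\<in>upper_half_plane. h (moeb (cmat (A ** B)) z) = a * a' * h z + b''"
  shows "b'' = a * b' + b"
proof -
  have "\<forall>\<^sub>\<approx>z\<in>upper_half_plane. z \<in> upper_half_plane \<and>
      h (moeb (cmat A) (moeb (cmat B) z)) = a * h (moeb (cmat B) z) + b \<and>
      h (moeb (cmat B) z) = a' * h z + b' \<and> h (moeb (cmat (A ** B)) z) = a * a' * h z + b''"
    using eventually_in_cosparse[OF order.refl open_upper_half_plane]
      eventually_cosparse_moeb_SL2Z[OF assms(2) A] B AB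
    by eventually_elim blast
  moreover have "cosparse upper_half_plane \<noteq> bot"
    by (auto simp: upper_half_plane_def intro: exI[of _ \<i>])
  ultimately obtain z where z: "z \<in> upper_half_plane"
      "h (moeb (cmat A) (moeb (cmat B) z)) = a * h (moeb (cmat B) z) + b"
      "h (moeb (cmat B) z) = a' * h z + b'" "h (moeb (cmat (A ** B)) z) = a * a' * h z + b''"
    using eventually_happens' by blast
  have "a * a' * h z + b'' = h (moeb (cmat A) (moeb (cmat B) z))"
    using z(1,4) moeb_cmat_mult[OF assms(1,2)] by (simp add: upper_half_plane_def)
  also have "\<dots> = a * (a' * h z + b') + b"
    using z(2,3) by simp
  finally show ?thesis
    by (simp add: algebra_simps)
qed

definition diagonal_ratio :: "complex^2^2 \<Rightarrow> complex" where
  "diagonal_ratio M = M$1$1 / M$2$2"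

lemma moeb_upper_triangular:
  fixes M :: "complex^2^2"
  assumes "M$2$1 = 0"
  shows "moeb M w = diagonal_ratio M * w + M$1$2 / M$2$2"
  using assms by (simp add: moeb_def diagonal_ratio_def add_divide_distrib)

lemma triangular_rep_diagonal_ratio_character:
  assumes "triangular_rep G \<rho>"
  shows "is_character G (\<lambda>A. diagonal_ratio (\<rho> A))"
  unfolding is_character_def
proof (intro conjI ballI)
  fix A assume "A \<in> G"
  then have "det (\<rho> A) \<noteq> 0" "\<rho> A$2$1 = 0"
    using assms invertible_det_nz unfolding triangular_rep_def is_rep_def by auto
  then show "diagonal_ratio (\<rho> A) \<noteq> 0"
    by (simp add: det_2 diagonal_ratio_def)
next
  fix A B assume "A \<in> G" "B \<in> G"
  then show "diagonal_ratio (\<rho> (A ** B)) = diagonal_ratio (\<rho> A) * diagonal_ratio (\<rho> B)"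
    using assms unfolding triangular_rep_def is_rep_def
    by (simp add: matrix_matrix_mult_2_nth diagonal_ratio_def)
qed

definition affine_matrix :: "complex \<Rightarrow> complex \<Rightarrow> complex^2^2" where
  "affine_matrix a b = vector [vector [a, b], vector [0, 1]]"

lemma affine_matrix_nth [simp]:
  "affine_matrix a b $1$1 = a" "affine_matrix a b $1$2 = b"
  "affine_matrix a b $2$1 = 0" "affine_matrix a b $2$2 = 1"
  by (simp_all add: affine_matrix_def)

lemma moeb_affine_matrix: "moeb (affine_matrix a b) w = a * w + b"
  by (simp add: moeb_def)

lemma triangular_rep_affine_matrix:
  assumes "is_character G chi"
    and "\<And>A B. A \<in> G \<Longrightarrow> B \<in> G \<Longrightarrow> \<beta> (A ** B) = chi A * \<beta> B + \<beta> A"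
  shows "triangular_rep G (\<lambda>A. affine_matrix (chi A) (\<beta> A))"
  unfolding triangular_rep_def is_rep_def
proof (intro conjI ballI)
  fix A assume "A \<in> G"
  then show "invertible (affine_matrix (chi A) (\<beta> A))"
    using assms(1) by (simp add: invertible_det_nz det_2 is_character_def)
  show "affine_matrix (chi A) (\<beta> A) $2$1 = 0"
    by simp
next
  fix A B assume "A \<in> G" "B \<in> G"
  then show "affine_matrix (chi (A ** B)) (\<beta> (A ** B)) =
      affine_matrix (chi A) (\<beta> A) ** affine_matrix (chi B) (\<beta> B)"
    using assms unfolding is_character_def
    by (simp add: vec_eq_iff forall_2 matrix_matrix_mult_2_nth)
qed

lemma mero_modform2_char_deriv_if_triangular_equivariant:
  assumes "G \<subseteq> SL2Z" "h meromorphic_on upper_half_plane"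
    and \<rho>: "triangular_rep G \<rho>" "rho_equivariant G \<rho> h"
  shows "mero_modform2_char G (\<lambda>A. diagonal_ratio (\<rho> A)) (deriv h)"
  unfolding mero_modform2_char_def
proof (intro conjI ballI)
  show "deriv h meromorphic_on upper_half_plane"
    using meromorphic_on_deriv[OF assms(2)] .
  fix \<gamma> assume "\<gamma> \<in> G"
  then have "\<exists>b. \<forall>\<^sub>\<approx>z\<in>upper_half_plane. h (moeb (cmat \<gamma>) z) = diagonal_ratio (\<rho> \<gamma>) * h z + b"
    using \<rho> unfolding triangular_rep_def rho_equivariant_def by (auto simp: moeb_upper_triangular)
  then show "\<forall>\<^sub>\<approx>z\<in>upper_half_plane.
      deriv h (moeb (cmat \<gamma>) z) = diagonal_ratio (\<rho> \<gamma>) * (automorphy_factor \<gamma> z)\<^sup>2 * deriv h z"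
    using SL2Z_affine_relation_iff_weight_2 assms(1,2) \<open>\<gamma> \<in> G\<close> by blast
qed

lemma triangular_equivariant_if_mero_modform2_char_deriv:
  assumes G: "G \<subseteq> SL2Z" "\<And>A B. A \<in> G \<Longrightarrow> B \<in> G \<Longrightarrow> A ** B \<in> G"
    and h: "h meromorphic_on upper_half_plane"
    and chi: "is_character G chi" "mero_modform2_char G chi (deriv h)"
  obtains \<beta> where "triangular_rep G (\<lambda>A. affine_matrix (chi A) (\<beta> A))"
    "rho_equivariant G (\<lambda>A. affine_matrix (chi A) (\<beta> A)) h"
proof -
  have "\<forall>\<gamma>\<in>G. \<exists>b. \<forall>\<^sub>\<approx>z\<in>upper_half_plane. h (moeb (cmat \<gamma>) z) = chi \<gamma> * h z + b"
    using chi(2) G(1) SL2Z_affine_relation_iff_weight_2[OF _ h] unfolding mero_modform2_char_def by blast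
  then obtain \<beta> where \<beta>: "\<And>\<gamma>. \<gamma> \<in> G \<Longrightarrow>
      \<forall>\<^sub>\<approx>z\<in>upper_half_plane. h (moeb (cmat \<gamma>) z) = chi \<gamma> * h z + \<beta> \<gamma>"
    by (metis bchoice)
  have "triangular_rep G (\<lambda>A. affine_matrix (chi A) (\<beta> A))"
  proof (rule triangular_rep_affine_matrix[OF chi(1)])
    fix A B assume A: "A \<in> G" and B: "B \<in> G"
    then have "chi (A ** B) = chi A * chi B"
      using chi(1) unfolding is_character_def by blast
    then have "\<forall>\<^sub>\<approx>z\<in>upper_half_plane.
        h (moeb (cmat (A ** B)) z) = chi A * chi B * h z + \<beta> (A ** B)"
      using \<beta>[OF G(2)[OF A B]] by simp
    then show "\<beta> (A ** B) = chi A * \<beta> B + \<beta> A"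
      using A B G(1) by (intro affine_relation_cocycle[OF _ _ \<beta>[OF A] \<beta>[OF B]]) auto
  qed
  moreover have "rho_equivariant G (\<lambda>A. affine_matrix (chi A) (\<beta> A)) h"
    using \<beta> by (simp add: rho_equivariant_def moeb_affine_matrix)
  ultimately show ?thesis
    using that by blast
qed

theorem theorem4p3:
  fixes h :: "complex \<Rightarrow> complex" and G :: "(int^2^2) set"
  assumes "h meromorphic_on upper_half_plane"
    and "finite_index_subgroup_SL2Z G"
  shows "(\<exists>\<rho>. triangular_rep G \<rho> \<and> rho_equivariant G \<rho> h) \<longleftrightarrow>
         (\<exists>chi. is_character G chi \<and> mero_modform2_char G chi (deriv h))"
proof
  have G: "G \<subseteq> SL2Z" "\<And>A B. A \<in> G \<Longrightarrow> B \<in> G \<Longrightarrow> A ** B \<in> G"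
    using assms(2) unfolding finite_index_subgroup_SL2Z_def by auto
  {
    assume "\<exists>\<rho>. triangular_rep G \<rho> \<and> rho_equivariant G \<rho> h"
    then obtain \<rho> where \<rho>: "triangular_rep G \<rho>" "rho_equivariant G \<rho> h"
      by blast
    show "\<exists>chi. is_character G chi \<and> mero_modform2_char G chi (deriv h)"
      using triangular_rep_diagonal_ratio_character[OF \<rho>(1)]
        mero_modform2_char_deriv_if_triangular_equivariant[OF G(1) assms(1) \<rho>] by blast
  next
    assume "\<exists>chi. is_character G chi \<and> mero_modform2_char G chi (deriv h)"
    then obtain chi where "is_character G chi" "mero_modform2_char G chi (deriv h)"
      by blast
    then show "\<exists>\<rho>. triangular_rep G \<rho> \<and> rho_equivariant G \<rho> h"
      using triangular_equivariant_if_mero_modform2_char_deriv[OF G assms(1)] by metis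
  }
qed

end
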